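(* There is a bijection between zero-dimensional tropical ideals of degree $2$ in $\mathbb{B}[x_1^{\pm1},\dots,x_n^{\pm1}]$ and proper sublattices $L\subsetneq\mathbb{Z}^n$. Under this bijection, the tropical ideal associated to $L$ is the one whose polynomials of minimal support are exactly the binomials $\mathbf x^{\mathbf u}\oplus\mathbf x^{\mathbf v}$ with $\mathbf u\neq\mathbf v$ and $\mathbf u-\mathbf v\in L$, and the trinomials $\mathbf x^{\mathbf u}\oplus\mathbf x^{\mathbf v}\oplus\mathbf x^{\mathbf w}$ with $\mathbf u,\mathbf v,\mathbf w$ distinct and no pairwise difference of $\mathbf u,\mathbf v,\mathbf w$ lying in $L$.
   Context: $\mathbb{B}=\{\infty,0\}$ with $\oplus=\min$ and multiplication $+$. For $f=\bigoplus c_{\mathbf u}\mathbf x^{\mathbf u}$, $\operatorname{supp}(f)=\{\mathbf u:c_{\mathbf u}\ne\infty\}$. An ideal $I\subset\mathbb{B}[x_1^{\pm1},\dots,x_n^{\pm1}]$ is a tropical ideal if for all $f,g\in I$ and $\mathbf u\in\operatorname{supp}(f)\cap\operatorname{supp}(g)$ there is $h\in I$ with $\operatorname{supp}(f)\Delta\operatorname{supp}(g)\subset\operatorname{supp}(h)\subset(\operatorname{supp}(f)\cup\operatorname{supp}(g))\setminus\{\mathbf u\}$. Its underlying matroid on $\mathbb{Z}^n$ has as independent sets those containing no support of a polynomial of $I$ (circuits = minimal supports). $I$ is zero-dimensional of degree $r$ iff this matroid has finite rank $r$ (equivalent to the Hilbert-polynomial definition). A polynomial of minimal support is one whose support is a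 circuit of the underlying matroid. *)

theory Defs
  imports "HOL-Analysis.Analysis"
begin

text \<open>A Laurent polynomial over the
Boolean semifield B = {inf, 0} is determined by its support (every coefficient is 0 or inf),
so we represent a polynomial by its support, a finite subset of Z^n.  The zero polynomial
(all coefficients inf) is the empty set.\<close>

type_synonym 'n bpoly = "(int ^ 'n) set"

definition supp :: "('n::finite) bpoly \<Rightarrow> (int ^ ('n::finite)) set" where
  "supp f = f"

definition tadd :: "('n::finite) bpoly \<Rightarrow> ('n::finite) bpoly \<Rightarrow> ('n::finite) bpoly" where
  "tadd f g = f \<union> g"

text \<open>Tropical product: exponents add, no cancellation over B, so Minkowski sum.\<close>
definition tmult :: "('n::finite) bpoly \<Rightarrow> ('n::finite) bpoly \<Rightarrow> ('n::finite) bpoly" where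
  "tmult f g = {u + v | u v. u \<in> f \<and> v \<in> g}"

definition monomial :: "int ^ ('n::finite) \<Rightarrow> ('n::finite) bpoly" where
  "monomial u = {u}"

definition is_ideal :: "('n::finite) bpoly set \<Rightarrow> bool" where
  "is_ideal I \<longleftrightarrow> I \<noteq> {} \<and> (\<forall>f\<in>I. finite f) \<and>
     (\<forall>f\<in>I. \<forall>g\<in>I. tadd f g \<in> I) \<and>
     (\<forall>f\<in>I. \<forall>g. finite g \<longrightarrow> tmult g f \<in> I)"

definition tropical_ideal :: "('n::finite) bpoly set \<Rightarrow> bool" where
  "tropical_ideal I \<longleftrightarrow> is_ideal I \<and>
     (\<forall>f\<in>I. \<forall>g\<in>I. \<forall>u \<in> supp f \<inter> supp g. \<exists>h\<in>I.
        (supp f - supp g) \<union> (supp g - supp f) \<subseteq> supp h \<and>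
        supp h \<subseteq> (supp f \<union> supp g) - {u})"

definition mat_indep :: "('n::finite) bpoly set \<Rightarrow> (int ^ ('n::finite)) set \<Rightarrow> bool" where
  "mat_indep I A \<longleftrightarrow> \<not> (\<exists>f\<in>I. supp f \<noteq> {} \<and> supp f \<subseteq> A)"

definition mat_circuit :: "('n::finite) bpoly set \<Rightarrow> (int ^ ('n::finite)) set \<Rightarrow> bool" where
  "mat_circuit I C \<longleftrightarrow> \<not> mat_indep I C \<and> (\<forall>B. B \<subset> C \<longrightarrow> mat_indep I B)"

definition mat_rank_eq :: "('n::finite) bpoly set \<Rightarrow> nat \<Rightarrow> bool" where
  "mat_rank_eq I r \<longleftrightarrow> (\<exists>A. mat_indep I A \<and> finite A \<and> card A = r) \<and>
     (\<forall>A. mat_indep I A \<longrightarrow> finite A \<and> card A \<le> r)"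

definition zero_dim_degree :: "('n::finite) bpoly set \<Rightarrow> nat \<Rightarrow> bool" where
  "zero_dim_degree I r \<longleftrightarrow> tropical_ideal I \<and> mat_rank_eq I r"

definition min_support_polys :: "('n::finite) bpoly set \<Rightarrow> ('n::finite) bpoly set" where
  "min_support_polys I = {f \<in> I. mat_circuit I (supp f)}"

definition sublattice :: "(int ^ ('n::finite)) set \<Rightarrow> bool" where
  "sublattice L \<longleftrightarrow> 0 \<in> L \<and> (\<forall>u\<in>L. \<forall>v\<in>L. u + v \<in> L) \<and> (\<forall>u\<in>L. - u \<in> L)"

definition proper_sublattice :: "(int ^ ('n::finite)) set \<Rightarrow> bool" where
  "proper_sublattice L \<longleftrightarrow> sublattice L \<and> L \<noteq> UNIV"

end

theory Submission
  imports Defs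
begin

text \<open>Write \<open>u \<equiv> v\<close> for \<open>u - v \<in> L\<close>. For a proper sublattice \<open>L\<close> the finite unions of the
  sets \<open>{u, v}\<close> with \<open>u \<equiv> v\<close> and \<open>{u, v, w}\<close> meeting three classes form a tropical ideal:
  membership is a pointwise condition, stable under translation and union, and circuit
  elimination only has to replace one point of a witness by another point of the same class
  or of a new class. Its matroid has rank 2, since any three points contain such a set,
  while two points in different classes do not. Conversely, a tropical ideal \<open>I\<close> of degree 2
  determines \<open>L = {d. d = 0 \<or> {0, d} \<in> I}\<close>: elimination between \<open>{0, a}\<close> and
  \<open>{a, a + b}\<close> makes it a lattice, and rank 2 forces every support-minimal member of \<open>I\<close> to be
  one of the sets above.\<close>

lemma sublattice_diff_self: "sublattice L \<Longrightarrow> x - x \<in> L"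
  by (simp add: sublattice_def)

lemma sublattice_diff_commute: "sublattice L \<Longrightarrow> x - y \<in> L \<longleftrightarrow> y - x \<in> L"
  by (metis minus_diff_eq sublattice_def)

lemma sublattice_diff_trans:
  assumes "sublattice L" "x - y \<in> L" "y - z \<in> L"
  shows "x - z \<in> L"
proof -
  have "x - z = (x - y) + (y - z)" by simp
  with assms show ?thesis unfolding sublattice_def by metis
qed

definition lattice_circuit :: "(int ^ ('n::finite)) set \<Rightarrow> 'n bpoly \<Rightarrow> bool" where
  "lattice_circuit L C \<longleftrightarrow> (\<exists>u v. u \<noteq> v \<and> u - v \<in> L \<and> C = {u,v}) \<or>
     (\<exists>u v w. u \<noteq> v \<and> u \<noteq> w \<and> v \<noteq> w \<and> u - v \<notin> L \<and> u - w \<notin> L \<and> v - w \<notin> L \<and> C = {u,v,w})"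

definition lattice_covered :: "(int ^ ('n::finite)) set \<Rightarrow> 'n bpoly \<Rightarrow> int ^ 'n \<Rightarrow> bool" where
  "lattice_covered L S x \<longleftrightarrow> (\<exists>y\<in>S. y \<noteq> x \<and> x - y \<in> L) \<or>
     (\<exists>y\<in>S. \<exists>z\<in>S. x - y \<notin> L \<and> x - z \<notin> L \<and> y - z \<notin> L)"

definition lattice_ideal :: "(int ^ ('n::finite)) set \<Rightarrow> 'n bpoly set" where
  "lattice_ideal L = {f. finite f \<and> (\<forall>x\<in>f. lattice_covered L f x)}"

lemma lattice_covered_mono: "lattice_covered L S x \<Longrightarrow> S \<subseteq> T \<Longrightarrow> lattice_covered L T x"
  unfolding lattice_covered_def by blast

lemma lattice_covered_translate:
  "lattice_covered L f x \<Longrightarrow> lattice_covered L ((+) a ` f) (a + x)"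
  unfolding lattice_covered_def by auto

lemma lattice_circuit_finite: "lattice_circuit L C \<Longrightarrow> finite C"
  unfolding lattice_circuit_def by auto

lemma lattice_circuit_card: "lattice_circuit L C \<Longrightarrow> card C = 2 \<or> card C = 3"
  unfolding lattice_circuit_def by auto

lemma lattice_circuit_pair: "u \<noteq> v \<Longrightarrow> u - v \<in> L \<Longrightarrow> lattice_circuit L {u, v}"
  unfolding lattice_circuit_def by (intro disjI1 exI[of _ u] exI[of _ v]) simp

lemma lattice_circuit_triple:
  "u - v \<notin> L \<Longrightarrow> u - w \<notin> L \<Longrightarrow> v - w \<notin> L \<Longrightarrow> u \<noteq> v \<Longrightarrow> u \<noteq> w \<Longrightarrow> v \<noteq> w \<Longrightarrow>
    lattice_circuit L {u, v, w}"
  unfolding lattice_circuit_def by (intro disjI2 exI[of _ u] exI[of _ v] exI[of _ w]) simp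

context
  fixes L :: "(int ^ ('n::finite)) set"
  assumes L: "sublattice L"
begin

lemma lattice_circuit_covered: "lattice_circuit L C \<Longrightarrow> x \<in> C \<Longrightarrow> lattice_covered L C x"
  unfolding lattice_circuit_def lattice_covered_def
  using sublattice_diff_commute[OF L] by auto

lemma lattice_covered_iff_circuit:
  assumes "x \<in> S"
  shows "lattice_covered L S x \<longleftrightarrow> (\<exists>C\<subseteq>S. x \<in> C \<and> lattice_circuit L C)"
proof
  assume "lattice_covered L S x"
  then show "\<exists>C\<subseteq>S. x \<in> C \<and> lattice_circuit L C"
    unfolding lattice_covered_def
  proof (elim disjE bexE conjE)
    fix y assume "y \<in> S" "y \<noteq> x" "x - y \<in> L"
    then have "lattice_circuit L {x, y}" by (intro lattice_circuit_pair) simp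
    with \<open>y \<in> S\<close> assms show ?thesis by (intro exI[of _ "{x, y}"]) simp
  next
    fix y z assume yz: "y \<in> S" "z \<in> S" "x - y \<notin> L" "x - z \<notin> L" "y - z \<notin> L"
    then have "x \<noteq> y" "x \<noteq> z" "y \<noteq> z"
      using sublattice_diff_self[OF L] by auto
    with yz have "lattice_circuit L {x, y, z}" by (intro lattice_circuit_triple)
    with yz assms show ?thesis by (intro exI[of _ "{x, y, z}"]) simp
  qed
next
  assume "\<exists>C\<subseteq>S. x \<in> C \<and> lattice_circuit L C"
  then show "lattice_covered L S x"
    using lattice_circuit_covered lattice_covered_mono by blast
qed

lemma lattice_circuit_in_lattice_ideal: "lattice_circuit L C \<Longrightarrow> C \<in> lattice_ideal L"
  unfolding lattice_ideal_def using lattice_circuit_finite lattice_circuit_covered by blast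

lemma pair_in_lattice_ideal_iff: "u \<noteq> v \<Longrightarrow> {u, v} \<in> lattice_ideal L \<longleftrightarrow> u - v \<in> L"
  unfolding lattice_ideal_def lattice_covered_def
  using sublattice_diff_self[OF L] sublattice_diff_commute[OF L] by auto

lemma lattice_circuit_antichain:
  assumes D: "lattice_circuit L D" and C: "lattice_circuit L C" and "D \<subseteq> C"
  shows "D = C"
proof (rule ccontr)
  assume "D \<noteq> C"
  then have "card D < card C"
    using psubset_card_mono[OF lattice_circuit_finite[OF C]] \<open>D \<subseteq> C\<close> by blast
  then have "card D = 2" "card C = 3"
    using lattice_circuit_card[OF D] lattice_circuit_card[OF C] by auto
  then obtain a b where ab: "D = {a, b}" "a \<noteq> b" "a - b \<in> L"
    using D unfolding lattice_circuit_def by auto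
  obtain u v w where uvw: "C = {u, v, w}" "u - v \<notin> L" "u - w \<notin> L" "v - w \<notin> L"
    using C \<open>card C = 3\<close> unfolding lattice_circuit_def by auto
  have "a \<in> {u, v, w}" "b \<in> {u, v, w}" using ab uvw \<open>D \<subseteq> C\<close> by auto
  then show False
    using ab uvw sublattice_diff_self[OF L] sublattice_diff_commute[OF L] by auto
qed

lemma mat_indep_lattice_ideal_iff:
  "mat_indep (lattice_ideal L) B \<longleftrightarrow> \<not> (\<exists>C\<subseteq>B. lattice_circuit L C)"
proof -
  have "(\<exists>f\<in>lattice_ideal L. f \<noteq> {} \<and> f \<subseteq> B) \<longleftrightarrow> (\<exists>C\<subseteq>B. lattice_circuit L C)"
  proof
    assume "\<exists>f\<in>lattice_ideal L. f \<noteq> {} \<and> f \<subseteq> B"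
    then obtain f x where f: "f \<in> lattice_ideal L" "f \<subseteq> B" "x \<in> f" by blast
    then have "lattice_covered L f x" unfolding lattice_ideal_def by blast
    then obtain C where "C \<subseteq> f" "lattice_circuit L C"
      using lattice_covered_iff_circuit[OF \<open>x \<in> f\<close>] by blast
    with f show "\<exists>C\<subseteq>B. lattice_circuit L C" by blast
  next
    assume "\<exists>C\<subseteq>B. lattice_circuit L C"
    then obtain C where C: "C \<subseteq> B" "lattice_circuit L C" by blast
    then have "C \<noteq> {}" using lattice_circuit_card[of L C] by auto
    with C show "\<exists>f\<in>lattice_ideal L. f \<noteq> {} \<and> f \<subseteq> B"
      using lattice_circuit_in_lattice_ideal by blast
  qed
  then show ?thesis unfolding mat_indep_def supp_def by blast
qed

lemma min_support_polys_lattice_ideal: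
  "f \<in> min_support_polys (lattice_ideal L) \<longleftrightarrow> lattice_circuit L f"
proof
  assume "f \<in> min_support_polys (lattice_ideal L)"
  then have f: "mat_circuit (lattice_ideal L) f"
    unfolding min_support_polys_def supp_def by blast
  then obtain D where "D \<subseteq> f" "lattice_circuit L D"
    unfolding mat_circuit_def mat_indep_lattice_ideal_iff by blast
  with f show "lattice_circuit L f"
    unfolding mat_circuit_def mat_indep_lattice_ideal_iff by blast
next
  assume "lattice_circuit L f"
  then show "f \<in> min_support_polys (lattice_ideal L)"
    unfolding min_support_polys_def mat_circuit_def mat_indep_lattice_ideal_iff supp_def
    using lattice_circuit_in_lattice_ideal lattice_circuit_antichain by blast
qed

lemma is_ideal_lattice_ideal: "is_ideal (lattice_ideal L)"
  unfolding is_ideal_def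
proof (intro conjI ballI allI impI)
  show "lattice_ideal L \<noteq> {}" unfolding lattice_ideal_def by auto
next
  fix f assume "f \<in> lattice_ideal L"
  then show "finite f" unfolding lattice_ideal_def by simp
next
  fix f g assume f: "f \<in> lattice_ideal L" and g: "g \<in> lattice_ideal L"
  have "lattice_covered L (f \<union> g) x" if "x \<in> f \<union> g" for x
  proof (cases "x \<in> f")
    case True
    with f have "lattice_covered L f x" unfolding lattice_ideal_def by simp
    then show ?thesis by (rule lattice_covered_mono) simp
  next
    case False
    with that g have "lattice_covered L g x" unfolding lattice_ideal_def by simp
    then show ?thesis by (rule lattice_covered_mono) simp
  qed
  with f g show "tadd f g \<in> lattice_ideal L" unfolding lattice_ideal_def tadd_def by simp
next
  fix f g :: "'n bpoly" assume f: "f \<in> lattice_ideal L" and g: "finite g"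
  have "lattice_covered L (tmult g f) y" if y: "y \<in> tmult g f" for y
  proof -
    obtain a x where "a \<in> g" "x \<in> f" "y = a + x" using y unfolding tmult_def by blast
    with f have "lattice_covered L f x" unfolding lattice_ideal_def by simp
    then have "lattice_covered L ((+) a ` f) y"
      unfolding \<open>y = a + x\<close> by (rule lattice_covered_translate)
    moreover have "(+) a ` f \<subseteq> tmult g f" using \<open>a \<in> g\<close> unfolding tmult_def by blast
    ultimately show ?thesis by (rule lattice_covered_mono)
  qed
  moreover have "tmult g f = (\<Union>a\<in>g. (+) a ` f)" unfolding tmult_def by blast
  then have "finite (tmult g f)" using f g unfolding lattice_ideal_def by simp
  ultimately show "tmult g f \<in> lattice_ideal L" unfolding lattice_ideal_def by simp
qed

text \<open>If \<open>x\<close>, \<open>u\<close>, \<open>z\<close> lie in three classes, the witness \<open>u\<close> may be traded for the points of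
  any \<open>g \<ni> u\<close> covering \<open>u\<close>: these yield either a point of the class of \<open>u\<close>, or a point of the
  class of \<open>x\<close>, or two further classes.\<close>

lemma lattice_covered_replace_witness:
  assumes g: "lattice_covered L g u" and "x \<notin> g" "g - {u} \<subseteq> S" "z \<in> S"
    and xuz: "x - u \<notin> L" "x - z \<notin> L" "u - z \<notin> L"
  shows "lattice_covered L S x"
  using g unfolding lattice_covered_def[of L g u]
proof (elim disjE bexE conjE)
  fix w assume w: "w \<in> g" "w \<noteq> u" "u - w \<in> L"
  have "x - w \<notin> L" "w - z \<notin> L"
    using xuz w sublattice_diff_trans[OF L] sublattice_diff_commute[OF L] by metis+
  then show ?thesis unfolding lattice_covered_def using w assms xuz by blast
next
  fix p q assume pq: "p \<in> g" "q \<in> g" "u - p \<notin> L" "u - q \<notin> L" "p - q \<notin> L"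
  then have "p \<in> S" "q \<in> S" "p \<noteq> x" "q \<noteq> x"
    using assms sublattice_diff_self[OF L] by auto
  then show ?thesis unfolding lattice_covered_def using pq by blast
qed

lemma lattice_covered_elim:
  assumes f: "lattice_covered L f x" and g: "lattice_covered L g u" and "x \<notin> g"
  shows "lattice_covered L ((f \<union> g) - {u}) x"
  using f unfolding lattice_covered_def[of L f x]
proof (elim disjE bexE conjE)
  fix y assume y: "y \<in> f" "y \<noteq> x" "x - y \<in> L"
  show ?thesis
  proof (cases "y = u")
    case True
    with y have xu: "x - u \<in> L" by simp
    have "x - w \<in> L \<longleftrightarrow> u - w \<in> L" for w
      using xu sublattice_diff_trans[OF L] sublattice_diff_commute[OF L] by metis
    with g \<open>x \<notin> g\<close> show ?thesis
      unfolding lattice_covered_def using sublattice_diff_self[OF L] by fastforce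
  qed (use y in \<open>auto simp: lattice_covered_def\<close>)
next
  fix y z assume yz: "y \<in> f" "z \<in> f" "x - y \<notin> L" "x - z \<notin> L" "y - z \<notin> L"
  have S: "g - {u} \<subseteq> (f \<union> g) - {u}" by blast
  consider "y = u" | "z = u" | "y \<noteq> u" "z \<noteq> u" by blast
  then show ?thesis
  proof cases
    case 1
    then have "z \<noteq> u" using yz sublattice_diff_self[OF L] by auto
    with 1 yz show ?thesis
      using lattice_covered_replace_witness[OF g \<open>x \<notin> g\<close> S] by blast
  next
    case 2
    then have "y \<noteq> u" using yz sublattice_diff_self[OF L] by auto
    with 2 yz show ?thesis
      using lattice_covered_replace_witness[OF g \<open>x \<notin> g\<close> S, of y]
        sublattice_diff_commute[OF L] by blast
  next
    case 3
    with yz show ?thesis unfolding lattice_covered_def by blast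
  qed
qed

lemma tropical_ideal_lattice_ideal: "tropical_ideal (lattice_ideal L)"
  unfolding tropical_ideal_def supp_def
proof (intro conjI ballI is_ideal_lattice_ideal)
  fix f g u assume f: "f \<in> lattice_ideal L" and g: "g \<in> lattice_ideal L" and u: "u \<in> f \<inter> g"
  define S where "S = (f \<union> g) - {u}"
  \<comment> \<open>the union of the lattice circuits inside \<open>S\<close>\<close>
  define h where "h = {y \<in> S. lattice_covered L S y}"
  have "h \<in> lattice_ideal L"
  proof -
    have "lattice_covered L h y" if "y \<in> h" for y
    proof -
      obtain C where "C \<subseteq> S" "y \<in> C" "lattice_circuit L C"
        using \<open>y \<in> h\<close> lattice_covered_iff_circuit unfolding h_def by blast
      then have "C \<subseteq> h"
        unfolding h_def using lattice_covered_iff_circuit by blast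
      with \<open>y \<in> C\<close> \<open>lattice_circuit L C\<close> show ?thesis
        using lattice_covered_iff_circuit[OF \<open>y \<in> h\<close>] by blast
    qed
    moreover have "finite h"
      using f g unfolding h_def S_def lattice_ideal_def by auto
    ultimately show ?thesis unfolding lattice_ideal_def by blast
  qed
  moreover have "(f - g) \<union> (g - f) \<subseteq> h"
  proof
    fix x assume x: "x \<in> (f - g) \<union> (g - f)"
    have "lattice_covered L S x"
    proof (cases "x \<in> f")
      case True
      with x f g u show ?thesis
        using lattice_covered_elim[of f x g u] unfolding lattice_ideal_def S_def by blast
    next
      case False
      with x f g u have "lattice_covered L ((g \<union> f) - {u}) x"
        using lattice_covered_elim[of g x f u] unfolding lattice_ideal_def by blast
      then show ?thesis unfolding S_def by (simp add: Un_commute)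
    qed
    moreover have "x \<in> S" using x u unfolding S_def by auto
    ultimately show "x \<in> h" unfolding h_def by blast
  qed
  moreover have "h \<subseteq> (f \<union> g) - {u}" unfolding h_def S_def by auto
  ultimately show "\<exists>h\<in>lattice_ideal L. (f - g) \<union> (g - f) \<subseteq> h \<and> h \<subseteq> (f \<union> g) - {u}"
    by blast
qed

lemma three_points_contain_lattice_circuit:
  assumes "x \<noteq> y" "y \<noteq> z" "x \<noteq> z"
  shows "\<exists>C\<subseteq>{x, y, z}. lattice_circuit L C"
proof -
  consider "x - y \<in> L" | "x - z \<in> L" | "y - z \<in> L" | "x - y \<notin> L" "x - z \<notin> L" "y - z \<notin> L"
    by blast
  then show ?thesis
  proof cases
    case 1
    with assms show ?thesis by (intro exI[of _ "{x, y}"]) (simp add: lattice_circuit_pair)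
  next
    case 2
    with assms show ?thesis by (intro exI[of _ "{x, z}"]) (simp add: lattice_circuit_pair)
  next
    case 3
    with assms show ?thesis by (intro exI[of _ "{y, z}"]) (simp add: lattice_circuit_pair)
  next
    case 4
    with assms show ?thesis by (intro exI[of _ "{x, y, z}"]) (simp add: lattice_circuit_triple)
  qed
qed

lemma lattice_ideal_indep_card_le_2:
  assumes "mat_indep (lattice_ideal L) A"
  shows "finite A \<and> card A \<le> 2"
proof (rule ccontr)
  assume large: "\<not> (finite A \<and> card A \<le> 2)"
  have "\<exists>B\<subseteq>A. card B = 3"
  proof (cases "finite A")
    case True
    with large have "3 \<le> card A" by simp
    then show ?thesis by (metis obtain_subset_with_card_n)
  next
    case False
    then show ?thesis by (metis infinite_arbitrarily_large)
  qed
  then obtain x y z where xyz: "{x, y, z} \<subseteq> A" "x \<noteq> y" "y \<noteq> z" "x \<noteq> z"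
    unfolding card_3_iff by blast
  then obtain C where "C \<subseteq> {x, y, z}" "lattice_circuit L C"
    using three_points_contain_lattice_circuit[OF xyz(2-4)] by blast
  moreover from this(1) xyz(1) have "C \<subseteq> A" by (rule subset_trans)
  ultimately show False using assms by (auto simp: mat_indep_lattice_ideal_iff)
qed

end

lemma zero_dim_degree_lattice_ideal:
  assumes "proper_sublattice L"
  shows "zero_dim_degree (lattice_ideal L) 2"
proof -
  have L: "sublattice L" using assms unfolding proper_sublattice_def by blast
  obtain d where "d \<notin> L" using assms unfolding proper_sublattice_def by blast
  then have "d \<noteq> 0" using L unfolding sublattice_def by auto
  have "mat_indep (lattice_ideal L) {0, d}"
    unfolding mat_indep_lattice_ideal_iff[OF L]
  proof
    assume "\<exists>C\<subseteq>{0, d}. lattice_circuit L C"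
    then obtain C where "C \<subseteq> {0, d}" "lattice_circuit L C" by blast
    then have "C = {0, d}"
      using lattice_circuit_card[of L C] card_mono[of "{0, d}" C] \<open>d \<noteq> 0\<close>
      by (intro card_subset_eq) auto
    with \<open>lattice_circuit L C\<close> \<open>d \<noteq> 0\<close> have "0 - d \<in> L"
      using pair_in_lattice_ideal_iff[OF L, of 0 d] lattice_circuit_in_lattice_ideal[OF L] by simp
    with \<open>d \<notin> L\<close> show False using sublattice_diff_commute[OF L, of 0 d] by simp
  qed
  moreover have "card {0, d} = 2" using \<open>d \<noteq> 0\<close> by simp
  ultimately show ?thesis
    unfolding zero_dim_degree_def mat_rank_eq_def
    using tropical_ideal_lattice_ideal[OF L] lattice_ideal_indep_card_le_2[OF L] by blast
qed

lemma inj_on_lattice_ideal: "inj_on lattice_ideal {L :: (int ^ ('n::finite)) set. sublattice L}"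
proof (rule inj_onI, rule set_eqI)
  fix L1 L2 :: "(int ^ 'n) set" and d
  assume "L1 \<in> {L. sublattice L}" "L2 \<in> {L. sublattice L}" "lattice_ideal L1 = lattice_ideal L2"
  then show "d \<in> L1 \<longleftrightarrow> d \<in> L2"
    using pair_in_lattice_ideal_iff[of L1 d 0] pair_in_lattice_ideal_iff[of L2 d 0]
    by (cases "d = 0") (auto simp: sublattice_def)
qed

lemma is_ideal_translate:
  assumes "is_ideal I" "f \<in> I"
  shows "(+) a ` f \<in> I"
proof -
  have "tmult {a} f = (+) a ` f" unfolding tmult_def by blast
  with assms show ?thesis unfolding is_ideal_def by (metis finite.emptyI finite.insertI)
qed

lemma is_ideal_translate_iff:
  assumes "is_ideal I"
  shows "(+) a ` f \<in> I \<longleftrightarrow> f \<in> I"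
proof
  assume "(+) a ` f \<in> I"
  then have "(+) (- a) ` (+) a ` f \<in> I" by (rule is_ideal_translate[OF assms])
  then show "f \<in> I" by (simp add: image_image)
qed (rule is_ideal_translate[OF assms])

lemma is_ideal_Union:
  assumes "is_ideal I"
  shows "finite F \<Longrightarrow> F \<subseteq> I \<Longrightarrow> \<Union>F \<in> I"
proof (induction F rule: finite_induct)
  case empty
  obtain f where "f \<in> I" using assms unfolding is_ideal_def by blast
  moreover have "tmult {} f = {}" unfolding tmult_def by blast
  ultimately show ?case using assms unfolding is_ideal_def by (metis Union_empty finite.emptyI)
next
  case (insert f F)
  then show ?case using assms unfolding is_ideal_def tadd_def by simp
qed

lemma tropical_ideal_elim:
  "tropical_ideal I \<Longrightarrow> f \<in> I \<Longrightarrow> g \<in> I \<Longrightarrow> u \<in> f \<Longrightarrow> u \<in> g \<Longrightarrow>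
    \<exists>h\<in>I. (f - g) \<union> (g - f) \<subseteq> h \<and> h \<subseteq> (f \<union> g) - {u}"
  unfolding tropical_ideal_def supp_def by blast

definition lattice_of_ideal :: "('n::finite) bpoly set \<Rightarrow> (int ^ 'n) set" where
  "lattice_of_ideal I = {d. d = 0 \<or> {0, d} \<in> I}"

lemma pair_in_ideal_iff:
  assumes "is_ideal I" "u \<noteq> v"
  shows "{u, v} \<in> I \<longleftrightarrow> u - v \<in> lattice_of_ideal I"
proof -
  have "(+) (- v) ` {u, v} = {0, u - v}" by (simp add: insert_commute)
  then show ?thesis
    using is_ideal_translate_iff[OF assms(1), of "- v" "{u, v}"] assms(2)
    unfolding lattice_of_ideal_def by simp
qed

lemma sublattice_lattice_of_ideal:
  assumes I: "tropical_ideal I"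
  shows "sublattice (lattice_of_ideal I)"
  unfolding sublattice_def
proof (intro conjI ballI)
  have ideal: "is_ideal I" using I unfolding tropical_ideal_def by blast
  show "0 \<in> lattice_of_ideal I" unfolding lattice_of_ideal_def by simp
  show "- d \<in> lattice_of_ideal I" if "d \<in> lattice_of_ideal I" for d
    using that pair_in_ideal_iff[OF ideal, of 0 d] unfolding lattice_of_ideal_def
    by (auto simp: insert_commute)
  fix a b assume a: "a \<in> lattice_of_ideal I" and b: "b \<in> lattice_of_ideal I"
  show "a + b \<in> lattice_of_ideal I"
  proof (cases "a = 0 \<or> b = 0 \<or> a + b = 0")
    case True
    then show ?thesis using a b unfolding lattice_of_ideal_def by auto
  next
    case False
    then have "{a, 0} \<in> I" "{a + b, a} \<in> I"
      using a b pair_in_ideal_iff[OF ideal] by auto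
    then obtain h where h: "h \<in> I" "({a, 0} - {a + b, a}) \<union> ({a + b, a} - {a, 0}) \<subseteq> h"
      "h \<subseteq> ({a, 0} \<union> {a + b, a}) - {a}"
      using tropical_ideal_elim[OF I, of "{a, 0}" "{a + b, a}" a] by blast
    have "h = {0, a + b}" using h(2,3) False by auto
    then show ?thesis using h(1) unfolding lattice_of_ideal_def by blast
  qed
qed

lemma mat_indep_subset_notin: "mat_indep I A \<Longrightarrow> f \<subseteq> A \<Longrightarrow> f \<noteq> {} \<Longrightarrow> f \<notin> I"
  unfolding mat_indep_def supp_def by blast

lemma singleton_notin_ideal:
  assumes "is_ideal I" "mat_rank_eq I r" "0 < r"
  shows "{x} \<notin> I"
proof
  assume "{x} \<in> I"
  obtain A where A: "mat_indep I A" "card A = r"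
    using assms(2) unfolding mat_rank_eq_def by blast
  with assms(3) have "A \<noteq> {}" by auto
  then obtain y where "y \<in> A" by blast
  have "{y} \<in> I" using is_ideal_translate[OF assms(1) \<open>{x} \<in> I\<close>, of "y - x"] by simp
  with A(1) \<open>y \<in> A\<close> show False using mat_indep_subset_notin[of I A "{y}"] by simp
qed

lemma proper_sublattice_lattice_of_ideal:
  assumes I: "tropical_ideal I" and "mat_rank_eq I r" "2 \<le> r"
  shows "proper_sublattice (lattice_of_ideal I)"
proof -
  have ideal: "is_ideal I" using I unfolding tropical_ideal_def by blast
  obtain A where A: "mat_indep I A" "finite A" "2 \<le> card A"
    using assms(2,3) unfolding mat_rank_eq_def by blast
  then obtain B where "B \<subseteq> A" "card B = 2" by (metis obtain_subset_with_card_n)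
  then obtain p q where "{p, q} \<subseteq> A" "p \<noteq> q" unfolding card_2_iff by blast
  then have "{p, q} \<notin> I" using mat_indep_subset_notin[OF A(1)] by simp
  then have "p - q \<notin> lattice_of_ideal I" using pair_in_ideal_iff[OF ideal \<open>p \<noteq> q\<close>] by simp
  then show ?thesis
    unfolding proper_sublattice_def using sublattice_lattice_of_ideal[OF I] by auto
qed

lemma tropical_ideal_minimal_member:
  assumes I: "tropical_ideal I" and "f \<in> I" "x \<in> f"
  shows "\<exists>g\<in>I. x \<in> g \<and> g \<subseteq> f \<and> (\<forall>h\<in>I. h \<subset> g \<longrightarrow> h = {})"
proof -
  obtain g where g: "g \<in> I" "x \<in> g" "g \<subseteq> f"
    and least: "\<And>g'. g' \<in> I \<Longrightarrow> x \<in> g' \<Longrightarrow> g' \<subseteq> f \<Longrightarrow> card g \<le> card g'"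
    using ex_has_least_nat[of "\<lambda>g. g \<in> I \<and> x \<in> g \<and> g \<subseteq> f" f card] assms by blast
  have "finite g" using g(1) I unfolding tropical_ideal_def is_ideal_def by blast
  have "h = {}" if h: "h \<in> I" "h \<subset> g" for h
  proof (rule ccontr)
    assume "h \<noteq> {}"
    then obtain y where "y \<in> h" by blast
    obtain h' where h': "h' \<in> I" "h' \<subset> g" "x \<in> h'"
    proof (cases "x \<in> h")
      case True
      show ?thesis by (rule that[OF h True])
    next
      case False
      have "y \<in> g" using h(2) \<open>y \<in> h\<close> by blast
      obtain h' where h': "h' \<in> I" "(g - h) \<union> (h - g) \<subseteq> h'" "h' \<subseteq> (g \<union> h) - {y}"
        using tropical_ideal_elim[OF I g(1) h(1) \<open>y \<in> g\<close> \<open>y \<in> h\<close>] by blast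
      have "h' \<subset> g" using h'(3) h(2) \<open>y \<in> g\<close> by blast
      moreover have "x \<in> h'" using h'(2) g(2) False by blast
      ultimately show ?thesis by (rule that[OF h'(1)])
    qed
    then have "card h' < card g" using psubset_card_mono[OF \<open>finite g\<close>] by blast
    moreover have "card g \<le> card h'" using least h' g(3) by blast
    ultimately show False by simp
  qed
  with g show ?thesis by blast
qed

context
  fixes I :: "('n::finite) bpoly set"
  assumes degree_2: "zero_dim_degree I 2"
begin

lemma degree_2_tropical: "tropical_ideal I"
  using degree_2 unfolding zero_dim_degree_def by blast

lemma degree_2_ideal: "is_ideal I"
  using degree_2_tropical unfolding tropical_ideal_def by blast

lemma degree_2_rank: "mat_rank_eq I 2"
  using degree_2 unfolding zero_dim_degree_def by blast

lemma degree_2_finite: "f \<in> I \<Longrightarrow> finite f"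
  using degree_2_ideal unfolding is_ideal_def by blast

lemma degree_2_singleton_notin: "{x} \<notin> I"
  using singleton_notin_ideal[OF degree_2_ideal degree_2_rank] by simp

lemma degree_2_three_dependent:
  assumes "card A = 3"
  obtains h where "h \<in> I" "h \<noteq> {}" "h \<subseteq> A"
proof -
  have "\<not> mat_indep I A" using degree_2_rank assms unfolding mat_rank_eq_def by fastforce
  then show ?thesis using that unfolding mat_indep_def supp_def by blast
qed

lemma minimal_member_lattice_circuit:
  assumes g: "g \<in> I" "g \<noteq> {}" and minimal: "\<forall>h\<in>I. h \<subset> g \<longrightarrow> h = {}"
  shows "lattice_circuit (lattice_of_ideal I) g"
proof -
  have "card g \<noteq> 0" using g degree_2_finite by simp
  then consider "card g = 1" | "card g = 2" | "3 \<le> card g" by linarith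
  then show ?thesis
  proof cases
    case 1
    then obtain a where "g = {a}" by (rule card_1_singletonE)
    with g(1) show ?thesis using degree_2_singleton_notin by simp
  next
    case 2
    then obtain a b where ab: "g = {a, b}" "a \<noteq> b" unfolding card_2_iff by blast
    with g(1) have "a - b \<in> lattice_of_ideal I"
      using pair_in_ideal_iff[OF degree_2_ideal \<open>a \<noteq> b\<close>] by simp
    with ab show ?thesis by (simp add: lattice_circuit_pair)
  next
    case 3
    then obtain B where "B \<subseteq> g" "card B = 3" by (metis obtain_subset_with_card_n)
    moreover obtain h where "h \<in> I" "h \<noteq> {}" "h \<subseteq> B"
      using degree_2_three_dependent[OF \<open>card B = 3\<close>] by blast
    moreover from this(1,2) minimal have "\<not> h \<subset> g" by blast
    ultimately have "card g = 3" by (metis psubsetI subset_antisym subset_trans)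
    then obtain a b c where abc: "g = {a, b, c}" "a \<noteq> b" "b \<noteq> c" "a \<noteq> c"
      unfolding card_3_iff by blast
    then have "{a, b} \<notin> I" "{a, c} \<notin> I" "{b, c} \<notin> I"
      using minimal by auto
    with abc show ?thesis
      using pair_in_ideal_iff[OF degree_2_ideal] by (simp add: lattice_circuit_triple)
  qed
qed

lemma lattice_circuit_in_ideal:
  assumes C: "lattice_circuit (lattice_of_ideal I) C"
  shows "C \<in> I"
  using C unfolding lattice_circuit_def
proof (elim disjE exE conjE)
  fix u v assume "u \<noteq> v" "u - v \<in> lattice_of_ideal I" "C = {u, v}"
  then show ?thesis using pair_in_ideal_iff[OF degree_2_ideal \<open>u \<noteq> v\<close>] by simp
next
  fix u v w
  assume uvw: "u \<noteq> v" "u \<noteq> w" "v \<noteq> w" "u - v \<notin> lattice_of_ideal I"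
    "u - w \<notin> lattice_of_ideal I" "v - w \<notin> lattice_of_ideal I" "C = {u, v, w}"
  then obtain h where h: "h \<in> I" "h \<noteq> {}" "h \<subseteq> C"
    using degree_2_three_dependent[of C] by auto
  have not_in_pair: "\<not> h \<subseteq> {a, b}" if "a \<noteq> b" "a - b \<notin> lattice_of_ideal I" for a b
  proof
    assume "h \<subseteq> {a, b}"
    with h(2) have "h = {a} \<or> h = {b} \<or> h = {a, b}" by auto
    then show False
      using h(1) that degree_2_singleton_notin pair_in_ideal_iff[OF degree_2_ideal \<open>a \<noteq> b\<close>]
      by auto
  qed
  have "u \<in> h" "v \<in> h" "w \<in> h"
    using not_in_pair[of v w] not_in_pair[of u w] not_in_pair[of u v] h(3) uvw by auto
  with h(3) uvw(7) have "h = C" by auto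
  with h(1) show ?thesis by simp
qed

lemma ideal_eq_lattice_ideal: "I = lattice_ideal (lattice_of_ideal I)"
proof
  have L: "sublattice (lattice_of_ideal I)"
    using sublattice_lattice_of_ideal[OF degree_2_tropical] .
  show "I \<subseteq> lattice_ideal (lattice_of_ideal I)"
  proof
    fix f assume "f \<in> I"
    have "lattice_covered (lattice_of_ideal I) f x" if "x \<in> f" for x
    proof -
      obtain g where g: "g \<in> I" "x \<in> g" "g \<subseteq> f" "\<forall>h\<in>I. h \<subset> g \<longrightarrow> h = {}"
        using tropical_ideal_minimal_member[OF degree_2_tropical \<open>f \<in> I\<close> \<open>x \<in> f\<close>] by blast
      then have "lattice_circuit (lattice_of_ideal I) g"
        by (intro minimal_member_lattice_circuit) auto
      with g show ?thesis unfolding lattice_covered_iff_circuit[OF L \<open>x \<in> f\<close>] by blast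
    qed
    with \<open>f \<in> I\<close> show "f \<in> lattice_ideal (lattice_of_ideal I)"
      unfolding lattice_ideal_def using degree_2_finite by simp
  qed
  show "lattice_ideal (lattice_of_ideal I) \<subseteq> I"
  proof
    fix f assume f: "f \<in> lattice_ideal (lattice_of_ideal I)"
    then have "\<forall>x\<in>f. \<exists>C. C \<subseteq> f \<and> x \<in> C \<and> lattice_circuit (lattice_of_ideal I) C"
      unfolding lattice_ideal_def using lattice_covered_iff_circuit[OF L] by auto
    then obtain C where C: "\<And>x. x \<in> f \<Longrightarrow> C x \<subseteq> f \<and> x \<in> C x \<and> lattice_circuit (lattice_of_ideal I) (C x)"
      by metis
    then have "f = \<Union>(C ` f)" by blast
    also have "\<dots> \<in> I"
    proof (rule is_ideal_Union[OF degree_2_ideal])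
      show "finite (C ` f)" using f unfolding lattice_ideal_def by simp
      show "C ` f \<subseteq> I" using C lattice_circuit_in_ideal by blast
    qed
    finally show "f \<in> I" .
  qed
qed

end

lemma lattice_ideal_image:
  "lattice_ideal ` {L. proper_sublattice L} = {I :: ('n::finite) bpoly set. zero_dim_degree I 2}"
proof (intro equalityI subsetI)
  fix I :: "'n bpoly set" assume "I \<in> lattice_ideal ` {L. proper_sublattice L}"
  then show "I \<in> {I. zero_dim_degree I 2}" using zero_dim_degree_lattice_ideal by blast
next
  fix I :: "'n bpoly set" assume "I \<in> {I. zero_dim_degree I 2}"
  then have deg: "zero_dim_degree I 2" by simp
  then have "proper_sublattice (lattice_of_ideal I)"
    using proper_sublattice_lattice_of_ideal[OF degree_2_tropical degree_2_rank] by simp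
  then show "I \<in> lattice_ideal ` {L. proper_sublattice L}"
    using image_eqI[of I lattice_ideal "lattice_of_ideal I"] ideal_eq_lattice_ideal[OF deg] by simp
qed

lemma bij_betw_lattice_ideal:
  "bij_betw lattice_ideal {L :: (int ^ ('n::finite)) set. proper_sublattice L}
     {I. zero_dim_degree I 2}"
proof (rule bij_betw_imageI)
  show "inj_on lattice_ideal {L :: (int ^ 'n) set. proper_sublattice L}"
    by (rule inj_on_subset[OF inj_on_lattice_ideal]) (auto simp: proper_sublattice_def)
qed (rule lattice_ideal_image)

lemma tadd_monomials:
  "tadd (monomial u) (monomial v) = {u, v}"
  "tadd {u, v} (monomial w) = {u, v, w}"
  unfolding tadd_def monomial_def by auto

theorem mainTheorem5:
  "\<exists>\<Phi> :: (int ^ 'n) set \<Rightarrow> 'n bpoly set.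
     bij_betw \<Phi> {L. proper_sublattice L} {I. zero_dim_degree I 2} \<and>
     (\<forall>L. proper_sublattice L \<longrightarrow>
        (\<forall>f. f \<in> min_support_polys (\<Phi> L) \<longleftrightarrow>
           (\<exists>u v. u \<noteq> v \<and> u - v \<in> L \<and> f = tadd (monomial u) (monomial v)) \<or>
           (\<exists>u v w. u \<noteq> v \<and> u \<noteq> w \<and> v \<noteq> w \<and>
              u - v \<notin> L \<and> u - w \<notin> L \<and> v - w \<notin> L \<and>
              f = tadd (tadd (monomial u) (monomial v)) (monomial w))))"
proof (intro exI[of _ lattice_ideal] conjI allI impI bij_betw_lattice_ideal)
  fix L :: "(int ^ 'n) set" and f
  assume "proper_sublattice L"
  then have "sublattice L" unfolding proper_sublattice_def by blast
  then show "f \<in> min_support_polys (lattice_ideal L) \<longleftrightarrow>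
           (\<exists>u v. u \<noteq> v \<and> u - v \<in> L \<and> f = tadd (monomial u) (monomial v)) \<or>
           (\<exists>u v w. u \<noteq> v \<and> u \<noteq> w \<and> v \<noteq> w \<and>
              u - v \<notin> L \<and> u - w \<notin> L \<and> v - w \<notin> L \<and>
              f = tadd (tadd (monomial u) (monomial v)) (monomial w))"
    unfolding tadd_monomials by (simp only: min_support_polys_lattice_ideal lattice_circuit_def)
qed

end
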